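(* Let $f\in\mathcal A_+(1)$ satisfy $\|f\|_{L^1(\mathbb{R})}=1$, $\widehat f=f$, $f(0)=0$, and $r(f)\in[\tfrac14,\tfrac1{\sqrt2}]$. Then for every $x\in(0,r(f)]$, $$f_+(x)\le \frac12+\frac{\sin\!\big(2\pi(r(f)-\tfrac14)x\big)-\sin(2\pi r(f)x)}{\pi x}.$$
   Context: Fourier transform: $\widehat f(\xi)=\int_{\mathbb{R}} f(x)e^{-2\pi i x\xi}\,dx$. $r(f):=\inf\{r>0: f(x)\ge 0 \text{ for all } |x|\ge r\}$. $\mathcal A_+(1)$ is the set of $f:\mathbb{R}\to\mathbb{R}$ with $f,\widehat f\in L^1(\mathbb{R})$, $\widehat f$ real-valued, $f$ eventually nonnegative (i.e. $\ge0$ for all large $|x|$) with $\widehat f(0)\le0$, and $\widehat f$ eventually nonnegative with $f(0)\le0$. $f_+:=\max\{f,0\}$. *)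

theory Defs
  imports "HOL-Analysis.Analysis"
begin

definition fourier :: "(real \<Rightarrow> real) \<Rightarrow> real \<Rightarrow> complex" where
  "fourier f \<xi> = (LINT x|lborel. complex_of_real (f x) * cis (- 2 * pi * x * \<xi>))"

definition eventually_nonneg :: "(real \<Rightarrow> real) \<Rightarrow> bool" where
  "eventually_nonneg g \<longleftrightarrow> (\<exists>R. \<forall>x. \<bar>x\<bar> \<ge> R \<longrightarrow> g x \<ge> 0)"

definition rad :: "(real \<Rightarrow> real) \<Rightarrow> real" where
  "rad f = Inf {r. r > 0 \<and> (\<forall>x. \<bar>x\<bar> \<ge> r \<longrightarrow> f x \<ge> 0)}"

definition A_plus_1 :: "(real \<Rightarrow> real) set" where
  "A_plus_1 = {f. integrable lborel f
      \<and> (\<forall>\<xi>. Im (fourier f \<xi>) = 0)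
      \<and> integrable lborel (\<lambda>\<xi>. Re (fourier f \<xi>))
      \<and> eventually_nonneg f \<and> Re (fourier f 0) \<le> 0
      \<and> eventually_nonneg (\<lambda>\<xi>. Re (fourier f \<xi>)) \<and> f 0 \<le> 0}"

definition pos_part :: "(real \<Rightarrow> real) \<Rightarrow> real \<Rightarrow> real" where
  "pos_part f x = max (f x) 0"

end

theory Submission
  imports Defs
begin

text \<open>
  Since \<open>f = \<widehat>f\<close> is real, \<open>f x = \<integral> f(t) cos(2\<pi>xt) dt\<close>. From \<open>f(0) = 0\<close> and
  \<open>\<parallel>f\<parallel>\<^sub>1 = 1\<close> the positive and negative parts \<open>f\<^sub>+, f\<^sub>-\<close> both have mass \<open>1/2\<close>, and
  \<open>|f| \<le> \<parallel>f\<parallel>\<^sub>1 = 1\<close>. The positive part contributes at most \<open>1/2\<close> to \<open>f x\<close>. The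
  negative part is supported in \<open>[-r, r]\<close> with \<open>r = r(f)\<close>, bounded by \<open>1\<close>, and \<open>cos(2\<pi>xt)\<close> decreases
  in \<open>|t|\<close> there because \<open>x r \<le> r\<^sup>2 \<le> 1/2\<close>; by the bathtub principle \<open>\<integral> f\<^sub>- cos\<close> is
  therefore at least its value for the indicator of the shell \<open>r - 1/4 \<le> |t| \<le> r\<close>,
  which is the explicit sine term.
\<close>

lemma Re_fourier_eq_integral_cos:
  assumes "integrable lborel f"
  shows "Re (fourier f \<xi>) = (LINT t|lborel. f t * cos (2 * pi * \<xi> * t))"
proof -
  have "integrable lborel (\<lambda>t. complex_of_real (f t) * cis (- 2 * pi * t * \<xi>))"
  proof (rule Bochner_Integration.integrable_bound)
    show "integrable lborel (\<lambda>t. complex_of_real (f t))"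
      using assms by (rule integrable_of_real)
    have "f \<in> borel_measurable lborel"
      using assms by (rule borel_measurable_integrable)
    moreover have "(\<lambda>t. cis (- 2 * pi * t * \<xi>)) \<in> borel_measurable lborel"
      unfolding measurable_lborel2 by (intro borel_measurable_continuous_onI continuous_intros)
    ultimately show "(\<lambda>t. complex_of_real (f t) * cis (- 2 * pi * t * \<xi>)) \<in> borel_measurable lborel"
      by (intro borel_measurable_times) (simp_all add: o_def)
    show "AE t in lborel. norm (complex_of_real (f t) * cis (- 2 * pi * t * \<xi>))
        \<le> norm (complex_of_real (f t))"
      by (simp add: norm_mult)
  qed
  then have "Re (fourier f \<xi>) = (LINT t|lborel. Re (complex_of_real (f t) * cis (- 2 * pi * t * \<xi>)))"
    unfolding fourier_def by (rule integral_Re[symmetric])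
  also have "\<dots> = (LINT t|lborel. f t * cos (2 * pi * \<xi> * t))"
  proof (rule Bochner_Integration.integral_cong[OF refl])
    fix t
    have "- 2 * pi * t * \<xi> = - (2 * pi * \<xi> * t)"
      by (simp add: mult_ac)
    then have "cos (- 2 * pi * t * \<xi>) = cos (2 * pi * \<xi> * t)"
      by (simp only: cos_minus)
    then show "Re (complex_of_real (f t) * cis (- 2 * pi * t * \<xi>)) = f t * cos (2 * pi * \<xi> * t)"
      by simp
  qed
  finally show ?thesis .
qed

lemma norm_fourier_le_integral_abs:
  "norm (fourier f \<xi>) \<le> (LINT t|lborel. \<bar>f t\<bar>)"
proof -
  have "norm (fourier f \<xi>) \<le> (LINT t|lborel. norm (complex_of_real (f t) * cis (- 2 * pi * t * \<xi>)))"
    unfolding fourier_def by (rule integral_norm_bound)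
  then show ?thesis
    by (simp add: norm_mult)
qed

lemma integrable_mult_bounded_continuous:
  fixes g h :: "real \<Rightarrow> real"
  assumes "integrable lborel g" "continuous_on UNIV h" "\<And>t. \<bar>h t\<bar> \<le> 1"
  shows "integrable lborel (\<lambda>t. g t * h t)"
proof (rule Bochner_Integration.integrable_bound[OF assms(1)])
  have "h \<in> borel_measurable lborel"
    using assms(2) by (simp add: borel_measurable_continuous_onI)
  then show "(\<lambda>t. g t * h t) \<in> borel_measurable lborel"
    using borel_measurable_integrable[OF assms(1)] by measurable
  show "AE t in lborel. norm (g t * h t) \<le> norm (g t)"
    using assms(3) by (simp add: abs_mult mult_left_le)
qed

lemma integral_pos_part:
  fixes f :: "real \<Rightarrow> real"
  assumes "integrable M f"
  shows "(LINT t|M. pos_part f t) = ((LINT t|M. \<bar>f t\<bar>) + (LINT t|M. f t)) / 2"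
proof -
  have "(LINT t|M. pos_part f t) = (LINT t|M. (\<bar>f t\<bar> + f t) / 2)"
    unfolding pos_part_def by (rule Bochner_Integration.integral_cong) auto
  also have "\<dots> = ((LINT t|M. \<bar>f t\<bar>) + (LINT t|M. f t)) / 2"
    using assms by (simp only: integral_divide_zero Bochner_Integration.integral_add integrable_abs)
  finally show ?thesis .
qed

lemma nonneg_beyond_rad:
  assumes "eventually_nonneg f" "rad f < \<bar>t\<bar>"
  shows "0 \<le> f t"
proof -
  define S where "S = {r. r > 0 \<and> (\<forall>x. \<bar>x\<bar> \<ge> r \<longrightarrow> f x \<ge> 0)}"
  obtain R where "\<forall>x. \<bar>x\<bar> \<ge> R \<longrightarrow> f x \<ge> 0"
    using assms(1) unfolding eventually_nonneg_def by blast
  then have "max R 1 \<in> S"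
    unfolding S_def by auto
  then have "S \<noteq> {}" by blast
  moreover have "bdd_below S"
    unfolding S_def by (rule bdd_belowI[of _ 0]) auto
  moreover have "Inf S < \<bar>t\<bar>"
    using assms(2) unfolding rad_def S_def by simp
  ultimately obtain s where "s \<in> S" "s < \<bar>t\<bar>"
    by (auto simp: cInf_less_iff)
  then show ?thesis
    unfolding S_def by auto
qed

text \<open>The bathtub principle in the form of a single sign condition.\<close>

lemma integral_mult_le_of_crossing:
  fixes g h c :: "'a \<Rightarrow> real"
  assumes "integrable M g" "integrable M h"
    and "integrable M (\<lambda>t. g t * c t)" "integrable M (\<lambda>t. h t * c t)"
    and "(LINT t|M. g t) = (LINT t|M. h t)"
    and "AE t in M. 0 \<le> (g t - h t) * (c t - k)"
  shows "(LINT t|M. h t * c t) \<le> (LINT t|M. g t * c t)"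
proof -
  have "0 \<le> (LINT t|M. (g t - h t) * (c t - k))"
    using assms(6) by (rule integral_nonneg_AE)
  also have "\<dots> = (LINT t|M. (g t * c t - h t * c t) - k * (g t - h t))"
    by (rule Bochner_Integration.integral_cong) (auto simp: algebra_simps)
  also have "\<dots> = (LINT t|M. g t * c t) - (LINT t|M. h t * c t) - k * ((LINT t|M. g t) - (LINT t|M. h t))"
    using assms(1-4) by (simp add: Bochner_Integration.integral_diff)
  finally show ?thesis
    using assms(5) by simp
qed

lemma integral_indicator_cos:
  fixes x a b :: real
  assumes "0 < x" "a \<le> b"
  shows "(LINT t|lborel. indicator {a..b} t * cos (2 * pi * x * t))
    = (sin (2 * pi * x * b) - sin (2 * pi * x * a)) / (2 * pi * x)"
proof -
  have "(LINT t|lborel. indicator {a..b} t *\<^sub>R cos (2 * pi * x * t))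
      = sin (2 * pi * x * b) / (2 * pi * x) - sin (2 * pi * x * a) / (2 * pi * x)"
  proof (rule integral_FTC_atLeastAtMost[OF assms(2)])
    fix t
    have "((\<lambda>t. sin (2 * pi * x * t) / (2 * pi * x)) has_real_derivative cos (2 * pi * x * t))
        (at t within {a..b})"
      using assms(1) by (auto intro!: derivative_eq_intros)
    then show "((\<lambda>t. sin (2 * pi * x * t) / (2 * pi * x)) has_vector_derivative cos (2 * pi * x * t))
        (at t within {a..b})"
      by (simp add: has_real_derivative_iff_has_vector_derivative)
  qed (intro continuous_intros)
  then show ?thesis
    by (simp add: diff_divide_distrib)
qed

lemma integral_mult_cos_le_integral:
  fixes g :: "real \<Rightarrow> real"
  assumes "integrable lborel g" "\<And>t. 0 \<le> g t"
  shows "(LINT t|lborel. g t * cos (2 * pi * x * t)) \<le> (LINT t|lborel. g t)"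
proof (rule integral_mono)
  show "integrable lborel (\<lambda>t. g t * cos (2 * pi * x * t))"
    using assms(1) by (rule integrable_mult_bounded_continuous) (auto intro: continuous_intros)
  show "g t * cos (2 * pi * x * t) \<le> g t" for t
    using assms(2)[of t] by (simp add: mult_left_le)
qed (use assms(1) in auto)

lemma integral_mult_cos_le_half_sub_neg_part:
  fixes f :: "real \<Rightarrow> real"
  assumes "integrable lborel f" "(LINT t|lborel. \<bar>f t\<bar>) = 1" "(LINT t|lborel. f t) = 0"
  shows "(LINT t|lborel. f t * cos (2 * pi * x * t))
    \<le> 1/2 - (LINT t|lborel. pos_part (\<lambda>t. - f t) t * cos (2 * pi * x * t))"
proof -
  define c where "c t = cos (2 * pi * x * t)" for t
  have pos_int: "integrable lborel (pos_part f)"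
    unfolding pos_part_def using assms(1) by simp
  have "f t * c t = pos_part f t * c t - pos_part (\<lambda>t. - f t) t * c t" for t
    unfolding pos_part_def by (simp add: left_diff_distrib[symmetric] max_def)
  then have "(LINT t|lborel. f t * c t)
      = (LINT t|lborel. pos_part f t * c t) - (LINT t|lborel. pos_part (\<lambda>t. - f t) t * c t)"
    using assms(1) pos_int unfolding c_def
    by (simp only:) (intro Bochner_Integration.integral_diff integrable_mult_bounded_continuous;
        auto simp: pos_part_def intro: continuous_intros)
  moreover have "(LINT t|lborel. pos_part f t * c t) \<le> 1/2"
    using integral_mult_cos_le_integral[OF pos_int, where x=x] integral_pos_part[OF assms(1)] assms(2,3)
    unfolding c_def by (simp add: pos_part_def)
  ultimately show ?thesis
    unfolding c_def by simp
qed

definition shell :: "real \<Rightarrow> real \<Rightarrow> real \<Rightarrow> real" where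
  "shell a r t = indicator {-r..-a} t + indicator {a..r} t"

lemma shell_eq_indicator_abs:
  assumes "0 \<le> a" "t \<noteq> 0"
  shows "shell a r t = (if a \<le> \<bar>t\<bar> \<and> \<bar>t\<bar> \<le> r then 1 else 0)"
  unfolding shell_def using assms by (cases "0 < t") (auto simp: indicator_def)

lemma integrable_indicator_mult_cos:
  "integrable lborel (\<lambda>t. indicator {u..v} t * cos (2 * pi * x * t))"
proof -
  have "integrable lborel (\<lambda>t. cos (2 * pi * x * t) * indicator {u..v} t)"
    by (rule borel_integrable_atLeastAtMost) simp
  then show ?thesis
    by (simp only: mult.commute)
qed

lemma integrable_shell_mult_cos:
  "integrable lborel (\<lambda>t. shell a r t * cos (2 * pi * x * t))"
  unfolding shell_def distrib_right
  by (intro Bochner_Integration.integrable_add integrable_indicator_mult_cos)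

lemma integral_shell:
  assumes "a \<le> r"
  shows "(LINT t|lborel. shell a r t) = 2 * (r - a)"
  using assms by (simp add: shell_def Bochner_Integration.integral_add)

lemma integral_shell_mult_cos:
  assumes "0 < x" "a \<le> r"
  shows "(LINT t|lborel. shell a r t * cos (2 * pi * x * t))
    = (sin (2 * pi * x * r) - sin (2 * pi * x * a)) / (pi * x)"
proof -
  have "(LINT t|lborel. shell a r t * cos (2 * pi * x * t))
      = (LINT t|lborel. indicator {-r..-a} t * cos (2 * pi * x * t))
        + (LINT t|lborel. indicator {a..r} t * cos (2 * pi * x * t))"
    unfolding shell_def distrib_right by (intro Bochner_Integration.integral_add integrable_indicator_mult_cos)
  also have "\<dots> = (sin (2 * pi * x * r) - sin (2 * pi * x * a)) / (pi * x)"
    using assms by (simp add: integral_indicator_cos)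
  finally show ?thesis .
qed

lemma cos_antimono_on_half_period:
  assumes "0 < x" "0 \<le> p" "p \<le> q" "x * q \<le> 1/2"
  shows "cos (2 * pi * x * q) \<le> cos (2 * pi * x * p)"
proof (rule cos_monotone_0_pi_le)
  have "2 * pi * (x * q) \<le> pi"
    using assms(4) by (simp add: mult_left_mono)
  then show "2 * pi * x * q \<le> pi"
    by (simp add: mult.assoc)
qed (use assms in auto)

lemma integral_mult_cos_ge_shell:
  fixes g :: "real \<Rightarrow> real"
  assumes g: "integrable lborel g" "\<And>t. 0 \<le> g t" "\<And>t. g t \<le> 1"
    and support: "\<And>t. r < \<bar>t\<bar> \<Longrightarrow> g t = 0"
    and mass: "(LINT t|lborel. g t) = 2 * (r - a)"
    and "0 \<le> a" "a \<le> r" "0 < x" "x * r \<le> 1/2"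
  shows "(sin (2 * pi * x * r) - sin (2 * pi * x * a)) / (pi * x)
    \<le> (LINT t|lborel. g t * cos (2 * pi * x * t))"
proof -
  define c where "c t = cos (2 * pi * x * t)" for t
  have c_abs: "c t = c \<bar>t\<bar>" for t
    unfolding c_def by (cases "0 \<le> t") auto
  have c_anti: "c q \<le> c p" if "0 \<le> p" "p \<le> q" "q \<le> r" for p q
  proof -
    have "x * q \<le> 1/2"
      using mult_left_mono[of q r x] that assms(8,9) by linarith
    then show ?thesis
      unfolding c_def using that assms(8) by (intro cos_antimono_on_half_period) auto
  qed
  have "0 \<le> (g t - shell a r t) * (c t - c a)" if "t \<noteq> 0" for t
  proof -
    consider "r < \<bar>t\<bar>" | "a \<le> \<bar>t\<bar>" "\<bar>t\<bar> \<le> r" | "\<bar>t\<bar> < a"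
      by linarith
    then show ?thesis
    proof cases
      case 1
      then show ?thesis
        using support shell_eq_indicator_abs[OF \<open>0 \<le> a\<close> that] by simp
    next
      case 2
      then have "c t \<le> c a"
        using c_abs[of t] c_anti \<open>0 \<le> a\<close> by simp
      then show ?thesis
        using 2 shell_eq_indicator_abs[OF \<open>0 \<le> a\<close> that] g(3)[of t] by (simp add: mult_nonpos_nonpos)
    next
      case 3
      then have "c a \<le> c t"
        using c_abs[of t] c_anti \<open>a \<le> r\<close> by simp
      then show ?thesis
        using 3 shell_eq_indicator_abs[OF \<open>0 \<le> a\<close> that] g(2)[of t] by simp
    qed
  qed
  then have "AE t in lborel. 0 \<le> (g t - shell a r t) * (c t - c a)"
    using AE_lborel_singleton[of 0] by (auto elim!: eventually_mono)
  moreover have "integrable lborel (\<lambda>t. g t * c t)"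
    using g(1) unfolding c_def by (rule integrable_mult_bounded_continuous) (auto intro: continuous_intros)
  moreover have "integrable lborel (shell a r)"
    unfolding shell_def
    using borel_integrable_atLeastAtMost[of "-r" "-a" "\<lambda>_. 1"] borel_integrable_atLeastAtMost[of a r "\<lambda>_. 1"]
    by simp
  ultimately show ?thesis
    using integral_mult_le_of_crossing[OF g(1), of "shell a r" c "c a"] integrable_shell_mult_cos[of a r x]
      integral_shell[OF \<open>a \<le> r\<close>] integral_shell_mult_cos[OF \<open>0 < x\<close> \<open>a \<le> r\<close>] mass
    unfolding c_def by simp
qed

theorem lemma2:
  fixes f :: "real \<Rightarrow> real"
  assumes "f \<in> A_plus_1"
    and "(LINT x|lborel. \<bar>f x\<bar>) = 1"
    and "\<forall>\<xi>. fourier f \<xi> = complex_of_real (f \<xi>)"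
    and "f 0 = 0"
    and "1/4 \<le> rad f" and "rad f \<le> 1 / sqrt 2"
  shows "\<forall>x. 0 < x \<and> x \<le> rad f \<longrightarrow>
           pos_part f x \<le> 1/2 + (sin (2 * pi * (rad f - 1/4) * x) - sin (2 * pi * rad f * x)) / (pi * x)"
proof (intro allI impI, elim conjE)
  fix x :: real
  assume "0 < x" "x \<le> rad f"
  define g where "g = pos_part (\<lambda>t. - f t)"
  define S where "S = (sin (2 * pi * x * rad f) - sin (2 * pi * x * (rad f - 1/4))) / (pi * x)"
  have f_int: "integrable lborel f" and "eventually_nonneg f"
    using assms(1) unfolding A_plus_1_def by auto
  have f_cos: "f \<xi> = (LINT t|lborel. f t * cos (2 * pi * \<xi> * t))" for \<xi>
    using Re_fourier_eq_integral_cos[OF f_int, of \<xi>] by (simp only: assms(3) Re_complex_of_real)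
  have mean_zero: "(LINT t|lborel. f t) = 0"
    using f_cos[of 0] assms(4) by simp
  have g_int: "integrable lborel g"
    unfolding g_def pos_part_def using f_int by simp
  have g_mass: "(LINT t|lborel. g t) = 1/2"
    using integral_pos_part[of lborel "\<lambda>t. - f t"] f_int mean_zero assms(2) by (simp add: g_def)
  have g_bounds: "0 \<le> g t" "g t \<le> 1" for t
    using norm_fourier_le_integral_abs[of f t] assms(2,3) unfolding g_def pos_part_def by auto
  have "g t = 0" if "rad f < \<bar>t\<bar>" for t
    using nonneg_beyond_rad[OF \<open>eventually_nonneg f\<close> that] unfolding g_def pos_part_def by simp
  moreover have "x * rad f \<le> (1 / sqrt 2) * (1 / sqrt 2)"
    using \<open>0 < x\<close> \<open>x \<le> rad f\<close> assms(6) by (intro mult_mono) auto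
  ultimately have "S \<le> (LINT t|lborel. g t * cos (2 * pi * x * t))"
    using integral_mult_cos_ge_shell[OF g_int g_bounds, of "rad f" "rad f - 1/4" x] g_mass assms(5) \<open>0 < x\<close>
    unfolding S_def by simp
  moreover have "(LINT t|lborel. g t * cos (2 * pi * x * t)) \<le> 1/2"
    using integral_mult_cos_le_integral[OF g_int g_bounds(1), where x=x] g_mass by simp
  moreover have "f x \<le> 1/2 - (LINT t|lborel. g t * cos (2 * pi * x * t))"
    using integral_mult_cos_le_half_sub_neg_part[OF f_int assms(2) mean_zero, where x=x] f_cos[of x]
    unfolding g_def by simp
  moreover have "1/2 + (sin (2 * pi * (rad f - 1/4) * x) - sin (2 * pi * rad f * x)) / (pi * x) = 1/2 - S"
    unfolding S_def by (simp add: mult_ac diff_divide_distrib)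
  ultimately show "pos_part f x \<le> 1/2 + (sin (2 * pi * (rad f - 1/4) * x) - sin (2 * pi * rad f * x)) / (pi * x)"
    unfolding pos_part_def by linarith
qed

end
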